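(* Let $(G,k)$ be an instance of \textsc{Bicolored $P_3$ Deletion} such that $G$ is nice, and let $p$ be the number of bicolored $P_3$s in $G$. Then for every two edges $e_1,e_2$ forming a bicolored $P_3$ in $G$ there is an edge $e\in\{e_1,e_2\}$ such that (a) $G-e$ contains exactly $p-1$ bicolored $P_3$s, and (b) $G-e$ is nice.
   Context: A two-colored graph $G=(V,E_r,E_b)$ is a finite simple undirected graph whose edge set $E=E_r\uplus E_b$ is partitioned into red and blue edges. A bicolored $P_3$ is an induced subgraph on three vertices $u,v,w$ with edges $\{u,v\},\{v,w\}$ of different colors and $\{u,w\}\notin E$; these two edges form the bicolored $P_3$. The following induced subgraphs are defined up to swapping the two colors (both versions count). An LC-Diamond on $u,v,w,z$: edges exactly $\{u,v\}$ blue, $\{v,w\}$ red, $\{u,z\}$ blue, $\{v,z\}$ red, $\{w,z\}$ blue. An LO-Diamond on $u,v,w,z$: edges exactly $\{u,v\}$ blue, $\{v,w\}$ red, $\{u,z\}$ blue, $\{v,z\}$ blue, $\{w,z\}$ red. An IIZ-Diamond on $u,v,w,z$: edges exactly $\{u,v\}$ blue, $\{v,w\}$ red, $\{u,z\}$ red, $\{v,z\}$ blue, $\{w,z\}$ blue. A CC-Hourglass on $u,v,w,z_1,z_2$: edges exactly $\{u,v\}$ blue, $\{v,w\}$ red, $\{u,z_1\}$ blue, $\{v,z_1\}$ red, $\{v,z_2\}$ blue, $\{w,z_2\}$ red. A two-colored graph is nice if it contains none of LC-Diamond, LO-Diamond, IIZ-Diamond, CC-Hourglass as an induced subgraph and every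 edge forms a bicolored $P_3$ with at most one other edge. \textsc{Bicolored $P_3$ Deletion}: given $G$ and $k\in\mathbb{N}$, decide whether some $S\subseteq E$ with $|S|\le k$ makes $G-S$ free of induced bicolored $P_3$s. *)

theory Defs
  imports Main
begin

definition two_colored_graph :: "'a set \<Rightarrow> 'a set set \<Rightarrow> 'a set set \<Rightarrow> bool" where
  "two_colored_graph V Er Eb \<longleftrightarrow> finite V \<and> Er \<inter> Eb = {} \<and>
     (\<forall>e \<in> Er \<union> Eb. \<exists>u v. u \<noteq> v \<and> u \<in> V \<and> v \<in> V \<and> e = {u, v})"

definition bicolored_P3 :: "'a set set \<Rightarrow> 'a set set \<Rightarrow> 'a \<Rightarrow> 'a \<Rightarrow> 'a \<Rightarrow> bool" where
  "bicolored_P3 Er Eb u v w \<longleftrightarrow> u \<noteq> v \<and> v \<noteq> w \<and> u \<noteq> w \<and>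
     (({u,v} \<in> Er \<and> {v,w} \<in> Eb) \<or> ({u,v} \<in> Eb \<and> {v,w} \<in> Er)) \<and>
     {u,w} \<notin> Er \<union> Eb"

definition forms_bP3 :: "'a set set \<Rightarrow> 'a set set \<Rightarrow> 'a set \<Rightarrow> 'a set \<Rightarrow> bool" where
  "forms_bP3 Er Eb e1 e2 \<longleftrightarrow>
     (\<exists>u v w. bicolored_P3 Er Eb u v w \<and> {e1, e2} = {{u,v},{v,w}})"

text \<open>The set of bicolored P3s, each identified with its (unordered) pair of edges.\<close>
definition bP3s :: "'a set set \<Rightarrow> 'a set set \<Rightarrow> 'a set set set" where
  "bP3s Er Eb = {{{u,v},{v,w}} | u v w. bicolored_P3 Er Eb u v w}"

definition num_bP3 :: "'a set set \<Rightarrow> 'a set set \<Rightarrow> nat" where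
  "num_bP3 Er Eb = card (bP3s Er Eb)"

text \<open>Induced subgraphs, with A, B the two colour classes (both orders are used).\<close>
definition LC_diamond :: "'a set set \<Rightarrow> 'a set set \<Rightarrow> 'a \<Rightarrow> 'a \<Rightarrow> 'a \<Rightarrow> 'a \<Rightarrow> bool" where
  "LC_diamond A B u v w z \<longleftrightarrow> distinct [u,v,w,z] \<and>
     {u,v} \<in> A \<and> {v,w} \<in> B \<and> {u,z} \<in> A \<and> {v,z} \<in> B \<and> {w,z} \<in> A \<and>
     {u,w} \<notin> A \<union> B"

definition LO_diamond :: "'a set set \<Rightarrow> 'a set set \<Rightarrow> 'a \<Rightarrow> 'a \<Rightarrow> 'a \<Rightarrow> 'a \<Rightarrow> bool" where
  "LO_diamond A B u v w z \<longleftrightarrow> distinct [u,v,w,z] \<and>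
     {u,v} \<in> A \<and> {v,w} \<in> B \<and> {u,z} \<in> A \<and> {v,z} \<in> A \<and> {w,z} \<in> B \<and>
     {u,w} \<notin> A \<union> B"

definition IIZ_diamond :: "'a set set \<Rightarrow> 'a set set \<Rightarrow> 'a \<Rightarrow> 'a \<Rightarrow> 'a \<Rightarrow> 'a \<Rightarrow> bool" where
  "IIZ_diamond A B u v w z \<longleftrightarrow> distinct [u,v,w,z] \<and>
     {u,v} \<in> A \<and> {v,w} \<in> B \<and> {u,z} \<in> B \<and> {v,z} \<in> A \<and> {w,z} \<in> A \<and>
     {u,w} \<notin> A \<union> B"

definition CC_hourglass :: "'a set set \<Rightarrow> 'a set set \<Rightarrow> 'a \<Rightarrow> 'a \<Rightarrow> 'a \<Rightarrow> 'a \<Rightarrow> 'a \<Rightarrow> bool" where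
  "CC_hourglass A B u v w z1 z2 \<longleftrightarrow> distinct [u,v,w,z1,z2] \<and>
     {u,v} \<in> A \<and> {v,w} \<in> B \<and> {u,z1} \<in> A \<and> {v,z1} \<in> B \<and> {v,z2} \<in> A \<and> {w,z2} \<in> B \<and>
     {u,w} \<notin> A \<union> B \<and> {u,z2} \<notin> A \<union> B \<and> {w,z1} \<notin> A \<union> B \<and> {z1,z2} \<notin> A \<union> B"

definition has_forbidden :: "'a set \<Rightarrow> 'a set set \<Rightarrow> 'a set set \<Rightarrow> bool" where
  "has_forbidden V Er Eb \<longleftrightarrow>
     (\<exists>(A,B) \<in> {(Eb,Er),(Er,Eb)}. \<exists>u\<in>V. \<exists>v\<in>V. \<exists>w\<in>V. \<exists>z\<in>V.
        LC_diamond A B u v w z \<or> LO_diamond A B u v w z \<or> IIZ_diamond A B u v w z \<or>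
        (\<exists>z2\<in>V. CC_hourglass A B u v w z z2))"

definition nice :: "'a set \<Rightarrow> 'a set set \<Rightarrow> 'a set set \<Rightarrow> bool" where
  "nice V Er Eb \<longleftrightarrow> \<not> has_forbidden V Er Eb \<and>
     (\<forall>e \<in> Er \<union> Eb. card {e'. forms_bP3 Er Eb e e'} \<le> 1)"

end

theory Submission
  imports Defs
begin

(*
  Deleting an edge e = {p, q} destroys the bicolored P3s through e and creates one for every
  vertex x joined to p and q by edges of different colours: we then say that e closes the
  bicolored path p-x-q.  In a nice graph distinct bicolored P3s are edge-disjoint, so deleting
  an edge of the given P3 removes exactly one of them, and it suffices to pick an edge of
  u-v-w that closes no bicolored path.  If both edges did, the forbidden diamonds pin down the
  two closing vertices x and y so rigidly that u, v, w, x, y span a CC-hourglass or an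
  LC-diamond.  Deleting an edge that closes no bicolored path keeps the graph nice: partner
  counts can only drop, and a forbidden subgraph of G - e either is one of G, or has e as its
  non-edge {u, z2} or {w, z1} of a CC-hourglass, and then four of its vertices span an LO- or
  IIZ-diamond of G.
*)

lemma two_colored_graph_swap: "two_colored_graph V B A = two_colored_graph V A B"
  unfolding two_colored_graph_def by blast

lemma bicolored_P3_swap: "bicolored_P3 B A = bicolored_P3 A B"
  unfolding bicolored_P3_def by (intro ext) blast

lemma bicolored_P3_rev: "bicolored_P3 A B w v u = bicolored_P3 A B u v w"
  unfolding bicolored_P3_def by (auto simp: insert_commute)

lemma forms_bP3_swap: "forms_bP3 B A = forms_bP3 A B"
  unfolding forms_bP3_def by (simp add: bicolored_P3_swap)

lemma has_forbidden_swap: "has_forbidden V B A = has_forbidden V A B"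
proof -
  have "{(B, A), (A, B)} = {(A, B), (B, A)}" by blast
  then show ?thesis by (simp only: has_forbidden_def)
qed

lemma nice_swap: "nice V B A = nice V A B"
  unfolding nice_def by (simp add: has_forbidden_swap forms_bP3_swap Un_commute)

lemma edge_endpoints:
  assumes "two_colored_graph V A B" "{a, b} \<in> A \<union> B"
  shows "a \<noteq> b" "a \<in> V" "b \<in> V"
proof -
  obtain x y where "x \<noteq> y" "x \<in> V" "y \<in> V" "{a, b} = {x, y}"
    using assms unfolding two_colored_graph_def by blast
  then show "a \<noteq> b" "a \<in> V" "b \<in> V" by (auto simp: doubleton_eq_iff)
qed

lemma finite_edges:
  assumes "two_colored_graph V A B"
  shows "finite (A \<union> B)"
proof (rule finite_subset)
  show "A \<union> B \<subseteq> Pow V"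
  proof
    fix e assume "e \<in> A \<union> B"
    then obtain x y where "x \<in> V" "y \<in> V" "e = {x, y}"
      using assms unfolding two_colored_graph_def by meson
    then show "e \<in> Pow V" by simp
  qed
  show "finite (Pow V)" using assms unfolding two_colored_graph_def by simp
qed

lemma forms_bP3_iff_mem_bP3s: "forms_bP3 A B e f \<longleftrightarrow> {e, f} \<in> bP3s A B"
  unfolding forms_bP3_def bP3s_def by auto

lemma finite_bP3s:
  assumes "two_colored_graph V A B"
  shows "finite (bP3s A B)"
proof (rule finite_subset)
  show "bP3s A B \<subseteq> Pow (A \<union> B)" unfolding bP3s_def bicolored_P3_def by auto
  show "finite (Pow (A \<union> B))" using finite_edges[OF assms] by simp
qed

lemma forms_bP3_edges:
  assumes "forms_bP3 A B e f"
  shows "e \<in> A \<union> B" "f \<in> A \<union> B"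
  using assms unfolding forms_bP3_def bicolored_P3_def by (auto simp: doubleton_eq_iff)

lemma finite_bP3_partners:
  assumes "two_colored_graph V A B"
  shows "finite {f. forms_bP3 A B e f}"
  by (rule finite_subset[OF _ finite_edges[OF assms]]) (use forms_bP3_edges(2) in blast)

lemma nice_bP3_partner_unique:
  assumes "two_colored_graph V A B" "nice V A B" "forms_bP3 A B e f" "forms_bP3 A B e f'"
  shows "f = f'"
proof -
  have "card {g. forms_bP3 A B e g} \<le> 1"
    using assms(2) forms_bP3_edges(1)[OF assms(3)] unfolding nice_def by blast
  with finite_bP3_partners[OF assms(1)] show ?thesis
    using assms(3,4) by (auto simp: card_le_Suc0_iff_eq)
qed

lemma nice_bP3s_edge_disjoint:
  assumes "two_colored_graph V A B" "nice V A B" "s \<in> bP3s A B" "s' \<in> bP3s A B"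
    and "e \<in> s" "e \<in> s'"
  shows "s = s'"
proof -
  have "\<exists>f. t = {e, f}" if "t \<in> bP3s A B" "e \<in> t" for t
    using that unfolding bP3s_def by (auto simp: insert_commute)
  then obtain f f' where "s = {e, f}" "s' = {e, f'}"
    using assms(3-6) by meson
  with assms have "f = f'"
    using nice_bP3_partner_unique forms_bP3_iff_mem_bP3s by metis
  with \<open>s = {e, f}\<close> \<open>s' = {e, f'}\<close> show ?thesis by simp
qed

lemma nice_no_forbidden:
  assumes "two_colored_graph V A B" "nice V A B"
  shows "\<not> LC_diamond A B u v w z" "\<not> LO_diamond A B u v w z" "\<not> IIZ_diamond A B u v w z"
    and "\<not> CC_hourglass A B u v w z1 z2"
proof -
  have in_V: "a \<in> V" "b \<in> V" if "{a, b} \<in> A \<union> B" for a b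
    using edge_endpoints[OF assms(1) that] by simp_all
  have no_forb: "\<not> has_forbidden V A B" using assms(2) unfolding nice_def by blast
  show "\<not> LC_diamond A B u v w z"
  proof
    assume H: "LC_diamond A B u v w z"
    then have "{u, v} \<in> A \<union> B" "{v, w} \<in> A \<union> B" "{u, z} \<in> A \<union> B"
      unfolding LC_diamond_def by auto
    with H no_forb show False using in_V unfolding has_forbidden_def by blast
  qed
  show "\<not> LO_diamond A B u v w z"
  proof
    assume H: "LO_diamond A B u v w z"
    then have "{u, v} \<in> A \<union> B" "{v, w} \<in> A \<union> B" "{u, z} \<in> A \<union> B"
      unfolding LO_diamond_def by auto
    with H no_forb show False using in_V unfolding has_forbidden_def by blast
  qed
  show "\<not> IIZ_diamond A B u v w z"
  proof
    assume H: "IIZ_diamond A B u v w z"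
    then have "{u, v} \<in> A \<union> B" "{v, w} \<in> A \<union> B" "{u, z} \<in> A \<union> B"
      unfolding IIZ_diamond_def by auto
    with H no_forb show False using in_V unfolding has_forbidden_def by blast
  qed
  show "\<not> CC_hourglass A B u v w z1 z2"
  proof
    assume H: "CC_hourglass A B u v w z1 z2"
    then have "{u, v} \<in> A \<union> B" "{v, w} \<in> A \<union> B" "{u, z1} \<in> A \<union> B" "{v, z2} \<in> A \<union> B"
      unfolding CC_hourglass_def by auto
    with H no_forb show False using in_V unfolding has_forbidden_def by blast
  qed
qed

definition closes_bicolored_path :: "'a set set \<Rightarrow> 'a set set \<Rightarrow> 'a set \<Rightarrow> bool" where
  "closes_bicolored_path A B e \<longleftrightarrow>
     (\<exists>a b c. e = {a, c} \<and> ({a, b} \<in> A \<and> {b, c} \<in> B \<or> {a, b} \<in> B \<and> {b, c} \<in> A))"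

lemma closes_bicolored_path_swap: "closes_bicolored_path B A = closes_bicolored_path A B"
  unfolding closes_bicolored_path_def by (intro ext) blast

lemma closes_bicolored_path_doubleton:
  "closes_bicolored_path A B {p, q} \<longleftrightarrow>
     (\<exists>x. {p, x} \<in> A \<and> {x, q} \<in> B \<or> {p, x} \<in> B \<and> {x, q} \<in> A)"
  unfolding closes_bicolored_path_def
proof
  assume "\<exists>a b c. {p, q} = {a, c} \<and> ({a, b} \<in> A \<and> {b, c} \<in> B \<or> {a, b} \<in> B \<and> {b, c} \<in> A)"
  then obtain a b c where "p = a \<and> q = c \<or> p = c \<and> q = a"
    and "{a, b} \<in> A \<and> {b, c} \<in> B \<or> {a, b} \<in> B \<and> {b, c} \<in> A"
    by (auto simp: doubleton_eq_iff)
  then show "\<exists>x. {p, x} \<in> A \<and> {x, q} \<in> B \<or> {p, x} \<in> B \<and> {x, q} \<in> A"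
    by (auto simp: insert_commute)
qed blast

lemma bicolored_common_neighbour_shape:
  assumes tcg: "two_colored_graph V A B" and nc: "nice V A B"
    and P: "bicolored_P3 A B u v w" and uv: "{u, v} \<in> A" and vw: "{v, w} \<in> B"
    and x: "{u, x} \<in> A \<and> {x, v} \<in> B \<or> {u, x} \<in> B \<and> {x, v} \<in> A"
  shows "{u, x} \<in> A \<and> {x, v} \<in> B \<and> {x, w} \<notin> A \<union> B"
proof -
  have uw: "{u, w} \<notin> A \<union> B" and ne: "u \<noteq> v" "v \<noteq> w" "u \<noteq> w"
    using P unfolding bicolored_P3_def by auto
  have disj: "A \<inter> B = {}" using tcg unfolding two_colored_graph_def by blast
  have "u \<noteq> x" "x \<noteq> v" using x edge_endpoints(1)[OF tcg] by blast+
  moreover have "x \<noteq> w" using x uw by (auto simp: insert_commute)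
  ultimately have dist: "distinct [u, v, w, x]" using ne by auto
  have xw: "{x, w} \<notin> A \<union> B"
  proof
    assume xw: "{x, w} \<in> A \<union> B"
    have "LC_diamond A B u v w x \<or> IIZ_diamond A B u v w x \<or>
        LO_diamond B A w x u v \<or> LC_diamond B A w v u x"
      using x xw dist uv vw uw disj
      unfolding LC_diamond_def LO_diamond_def IIZ_diamond_def
      by (simp add: insert_commute) blast
    moreover have "\<not> LO_diamond B A w x u v" "\<not> LC_diamond B A w v u x"
      using nice_no_forbidden[of V B A] tcg nc by (simp_all add: two_colored_graph_swap nice_swap)
    ultimately show False using nice_no_forbidden[OF tcg nc] by blast
  qed
  have "{x, v} \<notin> A"
  proof
    assume "{x, v} \<in> A"
    then have "bicolored_P3 A B x v w"
      using dist vw xw unfolding bicolored_P3_def by auto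
    then have "{{x, v}, {v, w}} \<in> bP3s A B" "{{u, v}, {v, w}} \<in> bP3s A B"
      using P unfolding bP3s_def by blast+
    then have "{{x, v}, {v, w}} = {{u, v}, {v, w}}"
      by (rule nice_bP3s_edge_disjoint[OF tcg nc, where e = "{v, w}"]) simp_all
    then show False using dist by (auto simp: doubleton_eq_iff)
  qed
  with x xw show ?thesis by blast
qed

lemma not_both_edges_close_bicolored_path_oriented:
  assumes tcg: "two_colored_graph V A B" and nc: "nice V A B"
    and P: "bicolored_P3 A B u v w" and uv: "{u, v} \<in> A" and vw: "{v, w} \<in> B"
  shows "\<not> closes_bicolored_path A B {u, v} \<or> \<not> closes_bicolored_path A B {w, v}"
proof (rule ccontr)
  assume "\<not> ?thesis"
  then obtain x y where
    x: "{u, x} \<in> A \<and> {x, v} \<in> B \<or> {u, x} \<in> B \<and> {x, v} \<in> A" and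
    y: "{w, y} \<in> A \<and> {y, v} \<in> B \<or> {w, y} \<in> B \<and> {y, v} \<in> A"
    unfolding closes_bicolored_path_doubleton by blast
  have X: "{u, x} \<in> A \<and> {x, v} \<in> B \<and> {x, w} \<notin> A \<union> B"
    using bicolored_common_neighbour_shape[OF tcg nc P uv vw x] .
  have Y: "{w, y} \<in> B \<and> {y, v} \<in> A \<and> {y, u} \<notin> A \<union> B"
  proof -
    have "two_colored_graph V B A" "nice V B A" "bicolored_P3 B A w v u"
      using tcg nc P by (simp_all add: two_colored_graph_swap nice_swap bicolored_P3_swap bicolored_P3_rev)
    moreover have "{w, v} \<in> B" "{v, u} \<in> A" using uv vw by (simp_all add: insert_commute)
    ultimately show ?thesis using bicolored_common_neighbour_shape[of V B A w v u y] y by blast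
  qed
  have uw: "{u, w} \<notin> A \<union> B" and ne: "u \<noteq> v" "v \<noteq> w" "u \<noteq> w"
    using P unfolding bicolored_P3_def by auto
  have "x \<noteq> u" "x \<noteq> v" "y \<noteq> w" "y \<noteq> v"
    using X Y edge_endpoints(1)[OF tcg] by (metis UnI1 UnI2)+
  moreover have "x \<noteq> w" "y \<noteq> u" "x \<noteq> y" using X Y uw by (auto simp: insert_commute)
  ultimately have dist: "distinct [u, v, w, x, y]" using ne by auto
  have "CC_hourglass A B u v w x y \<or> LC_diamond B A w y x v \<or> LC_diamond A B u x y v"
    using X Y dist uv vw uw
    unfolding CC_hourglass_def LC_diamond_def by (simp add: insert_commute) blast
  moreover have "\<not> LC_diamond B A w y x v"
    using nice_no_forbidden[of V B A] tcg nc by (simp add: two_colored_graph_swap nice_swap)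
  ultimately show False using nice_no_forbidden[OF tcg nc] by blast
qed

lemma not_both_edges_close_bicolored_path:
  assumes tcg: "two_colored_graph V A B" and nc: "nice V A B" and P: "bicolored_P3 A B u v w"
  shows "\<not> closes_bicolored_path A B {u, v} \<or> \<not> closes_bicolored_path A B {w, v}"
proof -
  have "{u, v} \<in> A \<and> {v, w} \<in> B \<or> {u, v} \<in> B \<and> {v, w} \<in> A"
    using P unfolding bicolored_P3_def by blast
  then show ?thesis
  proof
    assume "{u, v} \<in> A \<and> {v, w} \<in> B"
    then show ?thesis using not_both_edges_close_bicolored_path_oriented[OF tcg nc P] by blast
  next
    assume "{u, v} \<in> B \<and> {v, w} \<in> A"
    moreover have "two_colored_graph V B A" "nice V B A" "bicolored_P3 B A u v w"
      using tcg nc P by (simp_all add: two_colored_graph_swap nice_swap bicolored_P3_swap)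
    ultimately show ?thesis
      using not_both_edges_close_bicolored_path_oriented[of V B A u v w]
      by (simp add: closes_bicolored_path_swap)
  qed
qed

lemma bicolored_P3_delete_edge_iff:
  assumes "\<not> closes_bicolored_path A B e"
  shows "bicolored_P3 (A - {e}) (B - {e}) a b c \<longleftrightarrow>
    bicolored_P3 A B a b c \<and> e \<notin> {{a, b}, {b, c}}"
  using assms unfolding bicolored_P3_def closes_bicolored_path_def by blast

lemma bP3s_delete_edge:
  assumes "\<not> closes_bicolored_path A B e"
  shows "bP3s (A - {e}) (B - {e}) = {s \<in> bP3s A B. e \<notin> s}"
  unfolding bP3s_def bicolored_P3_delete_edge_iff[OF assms] by blast

lemma forms_bP3_delete_edge:
  assumes "\<not> closes_bicolored_path A B e" "forms_bP3 (A - {e}) (B - {e}) f g"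
  shows "forms_bP3 A B f g"
  using assms unfolding forms_bP3_iff_mem_bP3s bP3s_delete_edge[OF assms(1)] by blast

lemma num_bP3_delete_edge:
  assumes tcg: "two_colored_graph V A B" and nc: "nice V A B"
    and P: "bicolored_P3 A B u v w" and "\<not> closes_bicolored_path A B {u, v}"
  shows "num_bP3 (A - {{u, v}}) (B - {{u, v}}) = num_bP3 A B - 1"
proof -
  let ?s = "{{u, v}, {v, w}}"
  have s: "?s \<in> bP3s A B" using P unfolding bP3s_def by blast
  have "{t \<in> bP3s A B. {u, v} \<notin> t} = bP3s A B - {?s}"
    using nice_bP3s_edge_disjoint[OF tcg nc _ s] by blast
  then show ?thesis
    unfolding num_bP3_def bP3s_delete_edge[OF assms(4)] using s finite_bP3s[OF tcg] by simp
qed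

lemma closes_bicolored_pathI:
  "{a, b} \<in> X \<Longrightarrow> {b, c} \<in> Y \<Longrightarrow> closes_bicolored_path X Y {a, c}"
  unfolding closes_bicolored_path_def by blast

lemma LC_diamond_delete_edge:
  assumes "LC_diamond (X - {e}) (Y - {e}) a b c d" "\<not> closes_bicolored_path X Y e"
  shows "LC_diamond X Y a b c d"
proof -
  have "{a, b} \<in> X" "{b, c} \<in> Y" using assms(1) unfolding LC_diamond_def by blast+
  then have "e \<noteq> {a, c}" using assms(2) closes_bicolored_pathI by metis
  with assms(1) show ?thesis unfolding LC_diamond_def by blast
qed

lemma LO_diamond_delete_edge:
  assumes "LO_diamond (X - {e}) (Y - {e}) a b c d" "\<not> closes_bicolored_path X Y e"
  shows "LO_diamond X Y a b c d"
proof -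
  have "{a, b} \<in> X" "{b, c} \<in> Y" using assms(1) unfolding LO_diamond_def by blast+
  then have "e \<noteq> {a, c}" using assms(2) closes_bicolored_pathI by metis
  with assms(1) show ?thesis unfolding LO_diamond_def by blast
qed

lemma IIZ_diamond_delete_edge:
  assumes "IIZ_diamond (X - {e}) (Y - {e}) a b c d" "\<not> closes_bicolored_path X Y e"
  shows "IIZ_diamond X Y a b c d"
proof -
  have "{a, b} \<in> X" "{b, c} \<in> Y" using assms(1) unfolding IIZ_diamond_def by blast+
  then have "e \<noteq> {a, c}" using assms(2) closes_bicolored_pathI by metis
  with assms(1) show ?thesis unfolding IIZ_diamond_def by blast
qed

lemma CC_hourglass_swap: "CC_hourglass Y X c b a z2 z1 = CC_hourglass X Y a b c z1 z2"
  unfolding CC_hourglass_def by (auto simp: insert_commute)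

lemma CC_hourglass_delete_chord:
  assumes H: "CC_hourglass (X - {e}) (Y - {e}) a b c z1 z2" and e: "e = {a, z2}" "e \<in> X \<union> Y"
  shows "LO_diamond X Y a b c z2 \<or> IIZ_diamond X Y z1 a z2 b"
proof -
  have d: "distinct [a, b, c, z1, z2]"
    and E: "{a, b} \<in> X" "{b, c} \<in> Y" "{a, z1} \<in> X" "{b, z1} \<in> Y" "{b, z2} \<in> X" "{c, z2} \<in> Y"
    and N: "{a, c} \<notin> (X - {e}) \<union> (Y - {e})" "{z1, z2} \<notin> (X - {e}) \<union> (Y - {e})"
    using H unfolding CC_hourglass_def by simp_all
  have "{a, c} \<noteq> e" "{z1, z2} \<noteq> e" using d e(1) by (auto simp: doubleton_eq_iff)
  with N have N': "{a, c} \<notin> X \<union> Y" "{z1, z2} \<notin> X \<union> Y" by blast+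
  show ?thesis
  proof (cases "e \<in> X")
    case True
    then have "LO_diamond X Y a b c z2"
      using d E N' e(1) unfolding LO_diamond_def by simp
    then show ?thesis ..
  next
    case False
    then have "IIZ_diamond X Y z1 a z2 b"
      using d E N' e unfolding IIZ_diamond_def by (auto simp: insert_commute)
    then show ?thesis ..
  qed
qed

lemma CC_hourglass_delete_edge:
  assumes H: "CC_hourglass (X - {e}) (Y - {e}) a b c z1 z2"
    and nc: "\<not> closes_bicolored_path X Y e"
  shows "CC_hourglass X Y a b c z1 z2 \<or> LO_diamond X Y a b c z2 \<or> IIZ_diamond X Y z1 a z2 b \<or>
    LO_diamond Y X c b a z1 \<or> IIZ_diamond Y X z2 c z1 b"
proof -
  consider "e = {a, z2}" "e \<in> X \<union> Y" | "e = {c, z1}" "e \<in> Y \<union> X"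
    | "e \<noteq> {a, z2} \<or> e \<notin> X \<union> Y" "e \<noteq> {c, z1} \<or> e \<notin> X \<union> Y"
    by auto
  then show ?thesis
  proof cases
    case 1
    from CC_hourglass_delete_chord[OF H 1] show ?thesis by blast
  next
    case 2
    have "CC_hourglass (Y - {e}) (X - {e}) c b a z2 z1"
      using H by (simp only: CC_hourglass_swap)
    from CC_hourglass_delete_chord[OF this 2] show ?thesis by blast
  next
    case 3
    have d: "distinct [a, b, c, z1, z2]"
      and E: "{a, b} \<in> X" "{b, c} \<in> Y" "{a, z1} \<in> X" "{b, z1} \<in> Y" "{b, z2} \<in> X" "{c, z2} \<in> Y"
      and N: "{a, c} \<notin> (X - {e}) \<union> (Y - {e})" "{a, z2} \<notin> (X - {e}) \<union> (Y - {e})"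
        "{c, z1} \<notin> (X - {e}) \<union> (Y - {e})" "{z1, z2} \<notin> (X - {e}) \<union> (Y - {e})"
      using H unfolding CC_hourglass_def by simp_all
    have "closes_bicolored_path X Y {a, c}" "closes_bicolored_path Y X {z1, z2}"
      using E(1,2,4,5) closes_bicolored_pathI by (metis insert_commute)+
    then have "e \<noteq> {a, c}" "e \<noteq> {z1, z2}"
      using nc by (auto simp: closes_bicolored_path_swap)
    then have "{a, c} \<notin> X \<union> Y" "{z1, z2} \<notin> X \<union> Y" using N(1,4) by blast+
    moreover have "{a, z2} \<notin> X \<union> Y" using N(2) 3(1) by blast
    moreover have "{c, z1} \<notin> X \<union> Y" using N(3) 3(2) by blast
    ultimately have "CC_hourglass X Y a b c z1 z2" using d E unfolding CC_hourglass_def by simp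
    then show ?thesis ..
  qed
qed

lemma has_forbidden_delete_edge:
  assumes "has_forbidden V (A - {e}) (B - {e})" "\<not> closes_bicolored_path A B e"
  shows "has_forbidden V A B"
proof -
  obtain X Y u v w z where XY: "(X, Y) \<in> {(B, A), (A, B)}" and V: "u \<in> V" "v \<in> V" "w \<in> V" "z \<in> V"
    and H: "LC_diamond (X - {e}) (Y - {e}) u v w z \<or> LO_diamond (X - {e}) (Y - {e}) u v w z \<or>
      IIZ_diamond (X - {e}) (Y - {e}) u v w z \<or> (\<exists>z2\<in>V. CC_hourglass (X - {e}) (Y - {e}) u v w z z2)"
    using assms(1) unfolding has_forbidden_def by blast
  have nc: "\<not> closes_bicolored_path X Y e"
    using XY assms(2) by (auto simp: closes_bicolored_path_swap)
  have YX: "(Y, X) \<in> {(B, A), (A, B)}" using XY by blast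
  from H show ?thesis
  proof (elim disjE bexE)
    assume "LC_diamond (X - {e}) (Y - {e}) u v w z"
    then have "LC_diamond X Y u v w z" using nc by (rule LC_diamond_delete_edge)
    with XY V show ?thesis unfolding has_forbidden_def by blast
  next
    assume "LO_diamond (X - {e}) (Y - {e}) u v w z"
    then have "LO_diamond X Y u v w z" using nc by (rule LO_diamond_delete_edge)
    with XY V show ?thesis unfolding has_forbidden_def by blast
  next
    assume "IIZ_diamond (X - {e}) (Y - {e}) u v w z"
    then have "IIZ_diamond X Y u v w z" using nc by (rule IIZ_diamond_delete_edge)
    with XY V show ?thesis unfolding has_forbidden_def by blast
  next
    fix z2 assume "z2 \<in> V" "CC_hourglass (X - {e}) (Y - {e}) u v w z z2"
    from CC_hourglass_delete_edge[OF this(2) nc] show ?thesis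
    proof (elim disjE)
      assume "CC_hourglass X Y u v w z z2"
      with XY V \<open>z2 \<in> V\<close> show ?thesis unfolding has_forbidden_def by blast
    next
      assume "LO_diamond X Y u v w z2"
      with XY V \<open>z2 \<in> V\<close> show ?thesis unfolding has_forbidden_def by blast
    next
      assume "IIZ_diamond X Y z u z2 v"
      with XY V \<open>z2 \<in> V\<close> show ?thesis unfolding has_forbidden_def by blast
    next
      assume "LO_diamond Y X w v u z"
      with YX V show ?thesis unfolding has_forbidden_def by blast
    next
      assume "IIZ_diamond Y X z2 w z v"
      with YX V \<open>z2 \<in> V\<close> show ?thesis unfolding has_forbidden_def by blast
    qed
  qed
qed

lemma nice_delete_edge:
  assumes tcg: "two_colored_graph V A B" and nc: "nice V A B"
    and no_close: "\<not> closes_bicolored_path A B e"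
  shows "nice V (A - {e}) (B - {e})"
proof -
  have "\<not> has_forbidden V (A - {e}) (B - {e})"
    using has_forbidden_delete_edge no_close nc unfolding nice_def by blast
  moreover have "card {g. forms_bP3 (A - {e}) (B - {e}) f g} \<le> 1"
    if "f \<in> (A - {e}) \<union> (B - {e})" for f
  proof -
    have "card {g. forms_bP3 (A - {e}) (B - {e}) f g} \<le> card {g. forms_bP3 A B f g}"
      by (rule card_mono[OF finite_bP3_partners[OF tcg]]) (use forms_bP3_delete_edge[OF no_close] in blast)
    also have "\<dots> \<le> 1" using nc that unfolding nice_def by blast
    finally show ?thesis .
  qed
  ultimately show ?thesis unfolding nice_def by blast
qed

theorem proposition1:
  fixes V :: "'a set" and Er Eb :: "'a set set" and e1 e2 :: "'a set"
  assumes "two_colored_graph V Er Eb"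
    and "nice V Er Eb"
    and "forms_bP3 Er Eb e1 e2"
  shows "\<exists>e \<in> {e1, e2}.
           num_bP3 (Er - {e}) (Eb - {e}) = num_bP3 Er Eb - 1 \<and>
           nice V (Er - {e}) (Eb - {e})"
proof -
  obtain u v w where P: "bicolored_P3 Er Eb u v w" and E: "{e1, e2} = {{u, v}, {v, w}}"
    using assms(3) unfolding forms_bP3_def by blast
  have "bicolored_P3 Er Eb w v u" using P by (simp add: bicolored_P3_rev)
  moreover have "{u, v} \<in> {e1, e2}" "{w, v} \<in> {e1, e2}" using E by (auto simp: insert_commute)
  ultimately obtain p q r where "{p, q} \<in> {e1, e2}" "bicolored_P3 Er Eb p q r"
    and no_close: "\<not> closes_bicolored_path Er Eb {p, q}"
    using not_both_edges_close_bicolored_path[OF assms(1,2) P] P by blast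
  then show ?thesis
    using num_bP3_delete_edge[OF assms(1,2)] nice_delete_edge[OF assms(1,2) no_close] by blast
qed

end
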